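(* Let $(\Omega,\mathcal{F},\mathbf{P})$ be a probability space with $\sigma$-fields $\{\emptyset,\Omega\}=\mathcal{F}_0\subseteq\mathcal{F}_1\subseteq\cdots\subseteq\mathcal{F}_n\subseteq\mathcal{F}$, and let $(\xi_i,\mathcal{F}_i)_{i=1,\dots,n}$ be a sequence of conditionally symmetric martingale differences, i.e. each $\xi_i$ is real-valued, $\mathcal{F}_i$-measurable, integrable, $\mathbf{E}(\xi_i\mid\mathcal{F}_{i-1})=0$, and $\mathbf{P}(\xi_i>y\mid\mathcal{F}_{i-1})=\mathbf{P}(\xi_i<-y\mid\mathcal{F}_{i-1})$ for all $i$ and all $y\ge0$. Let $S_k=\sum_{i=1}^k\xi_i$ and, for $y\ge0$, \[ \mathrm{M}_k^{y}=\sum_{i=1}^k\Big(\mathbf{E}\big(\xi_i^2\mathbf{1}_{\{|\xi_i|\le y\}}\mid\mathcal{F}_{i-1}\big)+\xi_i^2\mathbf{1}_{\{|\xi_i|>y\}}\Big). \] Then for all $x,v>0$ and all $y\ge0$, \[ \mathbf{P}\Big(S_k\ge x\ \text{and}\ \mathrm{M}_k^{y}\le v^2\ \text{for some}\ k\in[1,n]\Big)\le B_0(x,y,v), \] where for $y>0$ \[ B_0(x,y,v)=\exp\left\{-\lambda x+\left(\frac{\cosh(\lambda y)-1}{y^2}\right)v^2\right\},\qquad \lambda=\frac1y\log\left(\sqrt{1+\frac{x^2y^2}{v^4}}+\frac{xy}{v^2}\right), \] and for $y=0$ one sets $B_0(x,0,v)=\lim_{y\to0+}B_0(x,y,v)=\exp\{-x^2/(2v^2)\}$.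 *)

theory Defs
  imports "HOL-Probability.Probability"
begin

definition B0 :: "real \<Rightarrow> real \<Rightarrow> real \<Rightarrow> real" where
  "B0 x y v =
    (if y = 0 then exp (- (x\<^sup>2) / (2 * v\<^sup>2))
     else (let lam = (1 / y) * ln (sqrt (1 + x\<^sup>2 * y\<^sup>2 / v ^ 4) + x * y / v\<^sup>2)
           in exp (- lam * x + ((cosh (lam * y) - 1) / y\<^sup>2) * v\<^sup>2)))"

end

theory Submission
  imports Defs
begin

text \<open>
  For \<open>\<lambda> \<ge> 0\<close> and \<open>g = (cosh (\<lambda> y) - 1) / y\<^sup>2\<close>, the process \<open>Z\<^sub>k = exp (\<lambda> S\<^sub>k - g M\<^sup>y\<^sub>k)\<close> is a
  nonnegative supermartingale. By conditional symmetry, \<open>\<phi>(\<xi>) = exp (\<lambda> \<xi> - g \<xi>\<^sup>2 1{|\<xi>| > y})\<close> may be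
  replaced by its even part \<open>(\<phi>(\<xi>) + \<phi>(-\<xi>))/2\<close> under conditional expectation, and pointwise this
  is at most \<open>1 + g \<xi>\<^sup>2 1{|\<xi>| \<le> y}\<close>: for large \<open>|\<xi>|\<close> by \<open>cosh u \<le> exp (u\<^sup>2/2)\<close> and \<open>g \<ge> \<lambda>\<^sup>2/2\<close>,
  for small \<open>|\<xi>|\<close> by comparing the power series of \<open>cosh\<close>. Since \<open>1 + g C \<le> exp (g C)\<close> with
  \<open>C = E(\<xi>\<^sup>2 1{|\<xi>| \<le> y} | F)\<close>, this gives \<open>E(Z\<^sub>k\<^sub>+\<^sub>1 | F\<^sub>k) \<le> Z\<^sub>k\<close>. At the first time \<open>k\<close> with
  \<open>S\<^sub>k \<ge> x\<close> and \<open>M\<^sup>y\<^sub>k \<le> v\<^sup>2\<close> we have \<open>Z\<^sub>k \<ge> exp (\<lambda> x - g v\<^sup>2)\<close>, so Ville's maximal inequality bounds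
  the probability by \<open>exp (- \<lambda> x + g v\<^sup>2)\<close>; \<open>B\<^sub>0\<close> is this bound at the optimal \<open>\<lambda>\<close>.
\<close>

section \<open>Elementary inequalities for \<open>cosh\<close>\<close>

text \<open>The coefficient of \<open>v\<^sup>2\<close> in \<open>B\<^sub>0\<close>, extended at \<open>y = 0\<close> by its limit \<open>\<lambda>\<^sup>2/2\<close>.\<close>
definition cosh_coeff :: "real \<Rightarrow> real \<Rightarrow> real" where
  "cosh_coeff y l = (if y = 0 then l\<^sup>2 / 2 else (cosh (l * y) - 1) / y\<^sup>2)"

lemma two_power_fact_le_fact_double: "2 ^ m * fact m \<le> (fact (2 * m) :: real)"
proof (induction m)
  case (Suc m)
  have "(2 :: real) ^ Suc m * fact (Suc m) = (2 * real m + 2) * (2 ^ m * fact m)"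
    by (simp add: algebra_simps)
  also have "\<dots> \<le> (2 * real m + 2) * fact (2 * m)"
    using Suc.IH by (intro mult_left_mono) auto
  also have "\<dots> \<le> (2 * real m + 2) * ((2 * real m + 1) * fact (2 * m))"
    by (intro mult_left_mono) (auto intro: mult_right_mono[of 1 _ "fact (2 * m)", simplified])
  also have "\<dots> = fact (2 * Suc m)"
    by (simp add: algebra_simps)
  finally show ?case .
qed simp

lemma cosh_real_sums: "(\<lambda>n. if even n then x ^ n / fact n else 0) sums cosh (x :: real)"
proof -
  have "(\<lambda>n. if even n then x ^ n /\<^sub>R fact n else 0) = (\<lambda>n. if even n then x ^ n / fact n else 0)"
    by (simp add: fun_eq_iff divide_inverse_commute)
  with cosh_converges[of x] show ?thesis by simp
qed

lemma exp_real_sums: "(\<lambda>n. x ^ n / fact n) sums exp (x :: real)"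
proof -
  have "(\<lambda>n. x ^ n /\<^sub>R fact n) = (\<lambda>n. x ^ n / fact n)"
    by (simp add: fun_eq_iff divide_inverse_commute)
  with exp_converges[of x] show ?thesis by simp
qed

lemma cosh_le_exp_half_square: "cosh (u :: real) \<le> exp (u\<^sup>2 / 2)"
proof -
  have exp_sums: "(\<lambda>n. if even n then (u\<^sup>2 / 2) ^ (n div 2) / fact (n div 2) else 0) sums exp (u\<^sup>2 / 2)"
    using sums_if[OF sums_zero exp_real_sums] by simp
  show ?thesis
  proof (rule sums_le[OF _ cosh_real_sums exp_sums])
    fix n :: nat
    show "(if even n then u ^ n / fact n else 0)
        \<le> (if even n then (u\<^sup>2 / 2) ^ (n div 2) / fact (n div 2) else 0)"
    proof (cases "even n")
      case True
      then obtain m where n: "n = 2 * m" by blast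
      have "(u\<^sup>2) ^ m / fact (2 * m) \<le> (u\<^sup>2) ^ m / (2 ^ m * fact m)"
        by (intro divide_left_mono two_power_fact_le_fact_double) auto
      also have "\<dots> = (u\<^sup>2 / 2) ^ m / fact m"
        by (simp add: power_divide)
      moreover have "u ^ n = (u\<^sup>2) ^ m"
        by (simp add: n power_mult)
      ultimately show ?thesis
        using True n by simp
    qed simp
  qed
qed

lemma one_plus_half_square_le_cosh: "1 + u\<^sup>2 / 2 \<le> cosh (u :: real)"
proof -
  have "(\<Sum>n\<in>{0, 1, 2}. if even n then u ^ n / fact n else 0)
      \<le> (\<Sum>n. if even n then u ^ n / fact n else 0)"
    by (rule sum_le_suminf) (use cosh_real_sums sums_summable in \<open>auto simp: zero_le_even_power\<close>)
  then show ?thesis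
    using sums_unique[OF cosh_real_sums] by (simp add: numeral_2_eq_2)
qed

text \<open>Termwise comparison of the even power series: \<open>(l t)\<^sup>2\<^sup>m \<le> (t/y)\<^sup>2 (l y)\<^sup>2\<^sup>m\<close> for \<open>m \<ge> 1\<close>.\<close>
lemma cosh_le_of_abs_le:
  fixes t y l :: real
  assumes "\<bar>t\<bar> \<le> y" "y > 0"
  shows "cosh (l * t) \<le> 1 + t\<^sup>2 * ((cosh (l * y) - 1) / y\<^sup>2)"
proof -
  define r where "r = t\<^sup>2 / y\<^sup>2"
  have "t\<^sup>2 \<le> y\<^sup>2"
    using assms power_mono[of "\<bar>t\<bar>" y 2] by simp
  then have r: "0 \<le> r" "r \<le> 1"
    using assms by (auto simp: r_def)
  have series: "(\<lambda>n. r * (if even n then (l * y) ^ n / fact n else 0) + (if n = 0 then 1 - r else 0))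
      sums (r * cosh (l * y) + (1 - r))"
    by (intro sums_add sums_mult cosh_real_sums) (rule sums_single)
  have "cosh (l * t) \<le> r * cosh (l * y) + (1 - r)"
  proof (rule sums_le[OF _ cosh_real_sums series])
    fix n :: nat
    show "(if even n then (l * t) ^ n / fact n else 0)
        \<le> r * (if even n then (l * y) ^ n / fact n else 0) + (if n = 0 then 1 - r else 0)"
    proof (cases "even n \<and> n \<noteq> 0")
      case True
      then obtain m where n: "n = 2 * m" and m: "m \<ge> 1"
        by (metis dvdE less_one not_less mult_0_right)
      have "(l * t) ^ n = r ^ m * (l * y) ^ n"
        using assms(2) by (simp add: r_def n power_mult power_mult_distrib power_divide)
      also have "\<dots> \<le> r * (l * y) ^ n"
        using power_decreasing[of 1 m r] r m n by (intro mult_right_mono) (auto simp: zero_le_even_power)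
      finally show ?thesis
        using True by (simp add: divide_right_mono)
    qed (use r in auto)
  qed
  also have "r * cosh (l * y) + (1 - r) = 1 + t\<^sup>2 * ((cosh (l * y) - 1) / y\<^sup>2)"
    using assms by (simp add: r_def field_simps)
  finally show ?thesis .
qed

lemma cosh_coeff_ge_half_square:
  assumes "y \<ge> 0"
  shows "l\<^sup>2 / 2 \<le> cosh_coeff y l"
proof (cases "y = 0")
  case False
  have "l\<^sup>2 / 2 * y\<^sup>2 \<le> cosh (l * y) - 1"
    using one_plus_half_square_le_cosh[of "l * y"] by (simp add: power_mult_distrib algebra_simps)
  then show ?thesis
    using False assms by (simp add: cosh_coeff_def pos_le_divide_eq)
qed (simp add: cosh_coeff_def)

lemma cosh_coeff_nonneg: "y \<ge> 0 \<Longrightarrow> 0 \<le> cosh_coeff y l"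
  using cosh_coeff_ge_half_square[of y l] by (meson order_trans zero_le_divide_iff zero_le_numeral zero_le_power2)

lemma exp_tilt_even_part_le:
  fixes l y t :: real
  assumes "y \<ge> 0"
  defines "g \<equiv> cosh_coeff y l"
  shows "exp (l * t - g * (t\<^sup>2 * of_bool (y < \<bar>t\<bar>))) + exp (l * (- t) - g * ((- t)\<^sup>2 * of_bool (y < \<bar>- t\<bar>)))
      \<le> 2 * (1 + g * (t\<^sup>2 * of_bool (\<bar>t\<bar> \<le> y)))"
proof -
  have sum_eq: "exp (l * t) + exp (- (l * t)) = 2 * cosh (l * t)"
    by (simp add: cosh_field_def)
  show ?thesis
  proof (cases "y < \<bar>t\<bar>")
    case True
    have "exp (l * t - g * t\<^sup>2) + exp (l * (- t) - g * t\<^sup>2) = 2 * cosh (l * t) * exp (- g * t\<^sup>2)"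
      by (simp add: sum_eq[symmetric] exp_diff exp_minus field_simps)
    also have "\<dots> \<le> 2 * exp ((l * t)\<^sup>2 / 2) * exp (- g * t\<^sup>2)"
      using cosh_le_exp_half_square[of "l * t"] by simp
    also have "\<dots> \<le> 2"
    proof -
      have "l\<^sup>2 / 2 * t\<^sup>2 \<le> g * t\<^sup>2"
        using cosh_coeff_ge_half_square[OF assms(1)] by (intro mult_right_mono) (auto simp: g_def)
      then show ?thesis
        by (simp add: exp_add[symmetric] power_mult_distrib)
    qed
    finally show ?thesis
      using True by simp
  next
    case False
    have "cosh (l * t) \<le> 1 + g * t\<^sup>2"
    proof (cases "y = 0")
      case False
      then show ?thesis
        using \<open>\<not> y < \<bar>t\<bar>\<close> assms cosh_le_of_abs_le[of t y l] by (simp add: g_def cosh_coeff_def mult.commute)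
    qed (use False in \<open>simp add: g_def\<close>)
    then show ?thesis
      using False sum_eq by simp
  qed
qed

section \<open>Conditionally symmetric random variables\<close>

lemma atMost_eq_INT_lessThan: "{..a} = (\<Inter>n. {..< a + inverse (Suc n)})" for a :: real
proof (intro set_eqI iffI)
  fix t assume "t \<in> (\<Inter>n. {..< a + inverse (Suc n)})"
  then have bound: "t < a + inverse (Suc n)" for n
    by blast
  show "t \<in> {..a}"
  proof (rule ccontr)
    assume "t \<notin> {..a}"
    then obtain n where "inverse (Suc n) < t - a"
      using reals_Archimedean[of "t - a"] by auto
    with bound[of n] show False
      by linarith
  qed
qed (auto intro: order.strict_trans1[where b = a])

lemma sets_borel_eq_sigma_rays:
  "sets (borel :: real measure) = sigma_sets UNIV ({UNIV, {}} \<union> {{z<..} | z. z \<ge> 0} \<union> {{..<z} | z. z \<le> 0})"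
  (is "_ = sigma_sets UNIV ?E")
proof -
  have "sets (borel :: real measure) = sigma_sets UNIV (range atMost)"
    by (subst borel_eq_atMost) simp
  also have "\<dots> = sigma_sets UNIV ?E"
  proof (rule sigma_sets_eqI)
    fix A assume "A \<in> ?E"
    then have "A \<in> sets (borel :: real measure)"
      by auto
    then show "A \<in> sigma_sets UNIV (range atMost)"
      by (subst (asm) borel_eq_atMost) simp
  next
    fix A :: "real set" assume "A \<in> range atMost"
    then obtain a where A: "A = {..a}" by auto
    show "A \<in> sigma_sets UNIV ?E"
    proof (cases "a \<ge> 0")
      case True
      have "UNIV - {a<..} \<in> sigma_sets UNIV ?E"
        using True by (intro sigma_sets.Compl sigma_sets.Basic) auto
      then show ?thesis
        by (simp add: A Compl_greaterThan[symmetric] Compl_eq_Diff_UNIV)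
    next
      case False
      have "A = {..<0} \<inter> (\<Inter>n. {..< a + inverse (Suc n)})"
        using False by (simp only: A atMost_eq_INT_lessThan[symmetric]) auto
      also have "\<dots> = (\<Inter>n. {..< min 0 (a + inverse (Suc n))})"
        by auto
      also have "\<dots> \<in> sigma_sets UNIV ?E"
        by (intro sigma_sets_Inter sigma_sets.Basic) auto
      finally show ?thesis .
    qed
  qed
  finally show ?thesis .
qed

lemma measure_eqI_rays:
  fixes \<mu> \<nu> :: "real measure"
  assumes sets: "sets \<mu> = sets borel" "sets \<nu> = sets borel"
    and UNIV: "emeasure \<mu> UNIV = emeasure \<nu> UNIV" "emeasure \<mu> UNIV \<noteq> \<infinity>"
    and right: "\<And>z. z \<ge> 0 \<Longrightarrow> emeasure \<mu> {z<..} = emeasure \<nu> {z<..}"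
    and left: "\<And>z. z \<ge> 0 \<Longrightarrow> emeasure \<mu> {..< - z} = emeasure \<nu> {..< - z}"
  shows "\<mu> = \<nu>"
proof -
  let ?E = "{UNIV, {}} \<union> {{z<..} | z::real. z \<ge> 0} \<union> {{..<z} | z. z \<le> 0}"
  show ?thesis
  proof (rule measure_eqI_generator_eq[where \<Omega> = UNIV and E = ?E and A = "\<lambda>_. UNIV"])
    show "Int_stable ?E"
      unfolding Int_stable_def by (safe; simp add: greaterThan_Int_greaterThan lessThan_Int_lessThan)
    show "sets \<mu> = sigma_sets UNIV ?E" "sets \<nu> = sigma_sets UNIV ?E"
      using sets sets_borel_eq_sigma_rays by simp_all
    fix X assume "X \<in> ?E"
    then consider "X = UNIV" | "X = {}" | z where "z \<ge> 0" "X = {z<..}" | z where "z \<ge> 0" "X = {..< - z}"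
      by (auto intro: that(3,4)[of "- _"] simp: minus_le_iff)
    then show "emeasure \<mu> X = emeasure \<nu> X"
      by cases (simp_all add: UNIV right left)
  qed (use UNIV in auto)
qed

definition cond_symmetric :: "'a measure \<Rightarrow> 'a measure \<Rightarrow> ('a \<Rightarrow> real) \<Rightarrow> bool" where
  "cond_symmetric M G \<xi> \<longleftrightarrow> (\<forall>z\<ge>0. AE \<omega> in M.
     real_cond_exp M G (indicator {\<omega>' \<in> space M. \<xi> \<omega>' > z}) \<omega>
   = real_cond_exp M G (indicator {\<omega>' \<in> space M. \<xi> \<omega>' < - z}) \<omega>)"

lemma cond_symmetric_weighted_rays:
  fixes \<xi> k :: "'a \<Rightarrow> real"
  assumes "finite_measure M" "subalgebra M G"
    and \<xi>[measurable]: "\<xi> \<in> borel_measurable M" and sym: "cond_symmetric M G \<xi>"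
    and k: "k \<in> borel_measurable G" "\<And>\<omega>. \<bar>k \<omega>\<bar> \<le> N" and "z \<ge> 0"
  shows "(\<integral>\<omega>. k \<omega> * indicator {\<omega> \<in> space M. z < \<xi> \<omega>} \<omega> \<partial>M)
       = (\<integral>\<omega>. k \<omega> * indicator {\<omega> \<in> space M. \<xi> \<omega> < - z} \<omega> \<partial>M)"
proof -
  interpret finite_measure M
    by fact
  interpret finite_measure_subalgebra M G
    by unfold_locales fact
  have [measurable]: "k \<in> borel_measurable M"
    by (rule measurable_from_subalg[OF subalg k(1)])
  have "0 \<le> N"
    using k(2) abs_ge_zero order_trans by blast
  have int: "integrable M (\<lambda>\<omega>. k \<omega> * indicator A \<omega>)" if "A \<in> sets M" for A
    by (rule integrable_const_bound[where B = N]) (use k that \<open>0 \<le> N\<close> in \<open>auto simp: indicator_def abs_mult\<close>)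
  have "(\<integral>\<omega>. k \<omega> * indicator {\<omega> \<in> space M. z < \<xi> \<omega>} \<omega> \<partial>M)
      = (\<integral>\<omega>. k \<omega> * real_cond_exp M G (indicator {\<omega> \<in> space M. z < \<xi> \<omega>}) \<omega> \<partial>M)"
    by (rule real_cond_exp_intg(2)[symmetric]) (use int k in auto)
  also have "\<dots> = (\<integral>\<omega>. k \<omega> * real_cond_exp M G (indicator {\<omega> \<in> space M. \<xi> \<omega> < - z}) \<omega> \<partial>M)"
    using sym \<open>z \<ge> 0\<close> unfolding cond_symmetric_def by (intro integral_cong_AE) auto
  also have "\<dots> = (\<integral>\<omega>. k \<omega> * indicator {\<omega> \<in> space M. \<xi> \<omega> < - z} \<omega> \<partial>M)"
    by (rule real_cond_exp_intg(2)) (use int k in auto)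
  finally show ?thesis .
qed

lemma cond_symmetric_nn_integral_reflect:
  fixes \<xi> k :: "'a \<Rightarrow> real" and \<psi> :: "real \<Rightarrow> ennreal"
  assumes "finite_measure M" "subalgebra M G"
    and \<xi>[measurable]: "\<xi> \<in> borel_measurable M" and sym: "cond_symmetric M G \<xi>"
    and k: "k \<in> borel_measurable G" "\<And>\<omega>. 0 \<le> k \<omega>" "\<And>\<omega>. k \<omega> \<le> N"
    and \<psi>[measurable]: "\<psi> \<in> borel_measurable borel"
  shows "(\<integral>\<^sup>+\<omega>. k \<omega> * \<psi> (\<xi> \<omega>) \<partial>M) = (\<integral>\<^sup>+\<omega>. k \<omega> * \<psi> (- \<xi> \<omega>) \<partial>M)"
proof -
  interpret finite_measure M
    by fact
  have [measurable]: "k \<in> borel_measurable M"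
    by (rule measurable_from_subalg[OF assms(2) k(1)])
  define D where "D = density M k"
  have emeasure_D: "emeasure D {\<omega> \<in> space M. P (\<xi> \<omega>)} = ennreal (\<integral>\<omega>. k \<omega> * indicator {\<omega> \<in> space M. P (\<xi> \<omega>)} \<omega> \<partial>M)"
    if [measurable]: "Measurable.pred borel P" for P
  proof -
    have "integrable M (\<lambda>\<omega>. k \<omega> * indicator {\<omega> \<in> space M. P (\<xi> \<omega>)} \<omega>)"
      using k order_trans[OF k(2,3)] by (intro integrable_const_bound[where B = N]) (auto simp: indicator_def)
    then show ?thesis
      unfolding D_def using k(2)
      by (subst emeasure_density) (auto simp: nn_integral_eq_integral[symmetric] indicator_def intro!: nn_integral_cong)
  qed
  have ray: "emeasure D {\<omega> \<in> space M. z < \<xi> \<omega>} = emeasure D {\<omega> \<in> space M. \<xi> \<omega> < - z}" if "z \<ge> 0" for z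
    using cond_symmetric_weighted_rays[OF assms(1,2) \<xi> sym k(1) _ that, of N] k(2,3)
      emeasure_D[of "\<lambda>t. z < t"] emeasure_D[of "\<lambda>t. t < - z"]
    by simp
  have "distr D borel \<xi> = distr D borel (\<lambda>\<omega>. - \<xi> \<omega>)"
  proof (rule measure_eqI_rays)
    have "emeasure D {\<omega> \<in> space M. True} \<noteq> \<infinity>"
      by (subst emeasure_D) auto
    then show "emeasure (distr D borel \<xi>) UNIV \<noteq> \<infinity>"
      by (simp add: emeasure_distr D_def)
    have "\<xi> -` {z<..} \<inter> space M = {\<omega> \<in> space M. z < \<xi> \<omega>}"
      "(\<lambda>\<omega>. - \<xi> \<omega>) -` {..< - z} \<inter> space M = {\<omega> \<in> space M. z < \<xi> \<omega>}"
      "\<xi> -` {..< - z} \<inter> space M = {\<omega> \<in> space M. \<xi> \<omega> < - z}"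
      "(\<lambda>\<omega>. - \<xi> \<omega>) -` {z<..} \<inter> space M = {\<omega> \<in> space M. \<xi> \<omega> < - z}" for z
      by auto
    then show "emeasure (distr D borel \<xi>) {z<..} = emeasure (distr D borel (\<lambda>\<omega>. - \<xi> \<omega>)) {z<..}"
      and "emeasure (distr D borel \<xi>) {..< - z} = emeasure (distr D borel (\<lambda>\<omega>. - \<xi> \<omega>)) {..< - z}"
      if "z \<ge> 0" for z
      using ray[OF that] by (simp_all add: emeasure_distr D_def)
  qed (simp_all add: emeasure_distr D_def)
  then have "(\<integral>\<^sup>+t. \<psi> t \<partial>distr D borel \<xi>) = (\<integral>\<^sup>+t. \<psi> t \<partial>distr D borel (\<lambda>\<omega>. - \<xi> \<omega>))"
    by simp
  then show ?thesis
    unfolding D_def using k(2) by (simp add: nn_integral_distr nn_integral_density)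
qed

lemma cond_symmetric_nn_integral_le_of_even_bound:
  fixes \<xi> k :: "'a \<Rightarrow> real" and \<phi> \<psi> :: "real \<Rightarrow> real" and N :: real
  assumes "finite_measure M" and G: "subalgebra M G"
    and \<xi>[measurable]: "\<xi> \<in> borel_measurable M" and sym: "cond_symmetric M G \<xi>"
    and k: "k \<in> borel_measurable G" "\<And>\<omega>. 0 \<le> k \<omega>" "\<And>\<omega>. k \<omega> \<le> N"
    and \<phi>[measurable]: "\<phi> \<in> borel_measurable borel" and \<phi>_nonneg: "\<And>t. 0 \<le> \<phi> t"
    and \<psi>[measurable]: "\<psi> \<in> borel_measurable borel"
    and even: "\<And>t. \<phi> t + \<phi> (- t) \<le> 2 * \<psi> t"
  shows "(\<integral>\<^sup>+\<omega>. ennreal (k \<omega> * \<phi> (\<xi> \<omega>)) \<partial>M) \<le> (\<integral>\<^sup>+\<omega>. ennreal (k \<omega> * \<psi> (\<xi> \<omega>)) \<partial>M)"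
proof -
  have [measurable]: "k \<in> borel_measurable M"
    by (rule measurable_from_subalg[OF G k(1)])
  have "2 * (\<integral>\<^sup>+\<omega>. ennreal (k \<omega> * \<phi> (\<xi> \<omega>)) \<partial>M)
      = (\<integral>\<^sup>+\<omega>. ennreal (k \<omega> * \<phi> (\<xi> \<omega>)) \<partial>M) + (\<integral>\<^sup>+\<omega>. ennreal (k \<omega> * \<phi> (- \<xi> \<omega>)) \<partial>M)"
    using cond_symmetric_nn_integral_reflect[OF assms(1) G \<xi> sym k, of "\<lambda>t. ennreal (\<phi> t)"] k(2) \<phi>_nonneg
    by (simp add: mult_2 ennreal_mult)
  also have "\<dots> = (\<integral>\<^sup>+\<omega>. ennreal (k \<omega> * (\<phi> (\<xi> \<omega>) + \<phi> (- \<xi> \<omega>))) \<partial>M)"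
    using k(2) \<phi>_nonneg
    by (subst nn_integral_add[symmetric]) (auto simp: distrib_left intro!: nn_integral_cong)
  also have "\<dots> \<le> (\<integral>\<^sup>+\<omega>. 2 * ennreal (k \<omega> * \<psi> (\<xi> \<omega>)) \<partial>M)"
  proof (intro nn_integral_mono)
    fix \<omega>
    have "k \<omega> * (\<phi> (\<xi> \<omega>) + \<phi> (- \<xi> \<omega>)) \<le> 2 * (k \<omega> * \<psi> (\<xi> \<omega>))"
      using mult_left_mono[OF even[of "\<xi> \<omega>"] k(2)] by (simp add: algebra_simps)
    then show "ennreal (k \<omega> * (\<phi> (\<xi> \<omega>) + \<phi> (- \<xi> \<omega>))) \<le> 2 * ennreal (k \<omega> * \<psi> (\<xi> \<omega>))"
      by (metis ennreal_leI ennreal_mult' ennreal_numeral zero_le_numeral)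
  qed
  also have "\<dots> = 2 * (\<integral>\<^sup>+\<omega>. ennreal (k \<omega> * \<psi> (\<xi> \<omega>)) \<partial>M)"
    by (rule nn_integral_cmult) measurable
  finally show ?thesis
    by (simp add: ennreal_mult_le_mult_iff)
qed

lemma integral_cond_exp_weight_le:
  fixes k f :: "'a \<Rightarrow> real" and g N B :: real
  assumes "finite_measure M" and G: "subalgebra M G"
    and k: "k \<in> borel_measurable G" "\<And>\<omega>. 0 \<le> k \<omega>" "\<And>\<omega>. k \<omega> \<le> N"
    and f: "f \<in> borel_measurable M" "\<And>\<omega>. \<bar>f \<omega>\<bar> \<le> B" and "g \<ge> 0"
  shows "(\<integral>\<omega>. k \<omega> * exp (- g * max 0 (real_cond_exp M G f \<omega>)) * (1 + g * f \<omega>) \<partial>M) \<le> (\<integral>\<omega>. k \<omega> \<partial>M)"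
proof -
  interpret finite_measure M
    by fact
  interpret finite_measure_subalgebra M G
    by unfold_locales fact
  note [measurable] = f(1) measurable_from_subalg[OF G k(1)]
  have "0 \<le> N"
    using k(2,3) order_trans by blast
  define C where "C = real_cond_exp M G f"
  define k1 where "k1 \<omega> = k \<omega> * exp (- g * max 0 (C \<omega>))" for \<omega>
  have k1_G: "k1 \<in> borel_measurable G"
    unfolding k1_def C_def using k(1) by measurable
  have k1: "0 \<le> k1 \<omega>" "k1 \<omega> \<le> N" for \<omega>
    using k(2,3)[of \<omega>] \<open>g \<ge> 0\<close> mult_left_mono[of "exp (- g * max 0 (C \<omega>))" 1 "k \<omega>"]
    by (simp_all add: k1_def)
  have [measurable]: "k1 \<in> borel_measurable M"
    by (rule measurable_from_subalg[OF G k1_G])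
  have int_k1: "integrable M k1"
    using k1 by (intro integrable_const_bound[where B = N]) auto
  have int_k1f: "integrable M (\<lambda>\<omega>. k1 \<omega> * f \<omega>)"
    using k1 f(2) \<open>0 \<le> N\<close>
    by (intro integrable_const_bound[where B = "N * B"]) (auto simp: abs_mult intro!: mult_mono)
  have int_k1C: "integrable M (\<lambda>\<omega>. k1 \<omega> * C \<omega>)"
    unfolding C_def using int_k1f k1_G by (rule real_cond_exp_intg(1)) simp
  have "(\<integral>\<omega>. k1 \<omega> * (1 + g * f \<omega>) \<partial>M) = (\<integral>\<omega>. k1 \<omega> \<partial>M) + g * (\<integral>\<omega>. k1 \<omega> * f \<omega> \<partial>M)"
    using int_k1 int_k1f by (simp add: algebra_simps)
  also have "(\<integral>\<omega>. k1 \<omega> * f \<omega> \<partial>M) = (\<integral>\<omega>. k1 \<omega> * C \<omega> \<partial>M)"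
    unfolding C_def using int_k1f k1_G by (rule real_cond_exp_intg(2)[symmetric]) simp
  also have "(\<integral>\<omega>. k1 \<omega> \<partial>M) + g * (\<integral>\<omega>. k1 \<omega> * C \<omega> \<partial>M) = (\<integral>\<omega>. k1 \<omega> * (1 + g * C \<omega>) \<partial>M)"
    using int_k1 int_k1C by (simp add: algebra_simps)
  also have "\<dots> \<le> (\<integral>\<omega>. k \<omega> \<partial>M)"
  proof (rule integral_mono)
    show "integrable M (\<lambda>\<omega>. k1 \<omega> * (1 + g * C \<omega>))"
      using int_k1 int_k1C by (simp add: algebra_simps)
    show "integrable M k"
      using k \<open>0 \<le> N\<close> by (intro integrable_const_bound[where B = N]) auto
    fix \<omega>
    have "1 + g * C \<omega> \<le> exp (g * max 0 (C \<omega>))"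
      using exp_ge_add_one_self[of "g * max 0 (C \<omega>)"] \<open>g \<ge> 0\<close> mult_left_mono[of "C \<omega>" "max 0 (C \<omega>)" g]
      by linarith
    then show "k1 \<omega> * (1 + g * C \<omega>) \<le> k \<omega>"
      using mult_left_mono[OF _ k1(1)] by (fastforce simp: k1_def exp_minus field_simps)
  qed
  finally show ?thesis
    by (simp add: k1_def C_def)
qed

lemma cond_symmetric_exp_step_bounded:
  fixes \<xi> k :: "'a \<Rightarrow> real" and \<phi> h :: "real \<Rightarrow> real" and g N H :: real
  assumes "finite_measure M" and G: "subalgebra M G"
    and \<xi>[measurable]: "\<xi> \<in> borel_measurable M" and sym: "cond_symmetric M G \<xi>"
    and k: "k \<in> borel_measurable G" "\<And>\<omega>. 0 \<le> k \<omega>" "\<And>\<omega>. k \<omega> \<le> N"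
    and \<phi>: "\<phi> \<in> borel_measurable borel" "\<And>t. 0 \<le> \<phi> t"
    and h: "h \<in> borel_measurable borel" "\<And>t. 0 \<le> h t" "\<And>t. h t \<le> H"
    and "g \<ge> 0"
    and even: "\<And>t. \<phi> t + \<phi> (- t) \<le> 2 * (1 + g * h t)"
  shows "(\<integral>\<^sup>+\<omega>. ennreal (k \<omega> * exp (- g * real_cond_exp M G (\<lambda>\<omega>. h (\<xi> \<omega>)) \<omega>) * \<phi> (\<xi> \<omega>)) \<partial>M)
    \<le> (\<integral>\<^sup>+\<omega>. ennreal (k \<omega>) \<partial>M)"
proof -
  interpret finite_measure M
    by fact
  interpret finite_measure_subalgebra M G
    by unfold_locales fact
  note [measurable] = \<phi>(1) h(1) measurable_from_subalg[OF G k(1)]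
  define C where "C = real_cond_exp M G (\<lambda>\<omega>. h (\<xi> \<omega>))"
  have C_nonneg: "AE \<omega> in M. 0 \<le> C \<omega>"
    unfolding C_def using h(2) by (intro real_cond_exp_pos) auto
  text \<open>\<open>max 0 C = C\<close> almost everywhere, but only the maximum gives \<open>k1 \<le> k\<close> everywhere.\<close>
  define k1 where "k1 \<omega> = k \<omega> * exp (- g * max 0 (C \<omega>))" for \<omega>
  have k1: "k1 \<in> borel_measurable G" "0 \<le> k1 \<omega>" "k1 \<omega> \<le> N" for \<omega>
    using k(1) k(2,3)[of \<omega>] \<open>g \<ge> 0\<close> mult_left_mono[of "exp (- g * max 0 (C \<omega>))" 1 "k \<omega>"]
    unfolding k1_def C_def by (measurable, simp_all)
  have [measurable]: "k1 \<in> borel_measurable M"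
    by (rule measurable_from_subalg[OF G k1(1)])
  have "integrable M (\<lambda>\<omega>. k1 \<omega> * (1 + g * h (\<xi> \<omega>)))"
    using k1(2,3) h(2,3) \<open>g \<ge> 0\<close> order_trans[OF k1(2,3)]
    by (intro integrable_const_bound[where B = "N * (1 + g * H)"])
      (auto simp: abs_mult intro!: mult_mono add_mono mult_left_mono)
  have "(\<integral>\<^sup>+\<omega>. ennreal (k \<omega> * exp (- g * C \<omega>) * \<phi> (\<xi> \<omega>)) \<partial>M) = (\<integral>\<^sup>+\<omega>. ennreal (k1 \<omega> * \<phi> (\<xi> \<omega>)) \<partial>M)"
    using C_nonneg by (intro nn_integral_cong_AE) (auto elim!: eventually_mono simp: k1_def)
  also have "\<dots> \<le> (\<integral>\<^sup>+\<omega>. ennreal (k1 \<omega> * (1 + g * h (\<xi> \<omega>))) \<partial>M)"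
    by (rule cond_symmetric_nn_integral_le_of_even_bound[OF assms(1) G \<xi> sym k1 \<phi> _ even]) measurable
  also have "\<dots> = ennreal (\<integral>\<omega>. k1 \<omega> * (1 + g * h (\<xi> \<omega>)) \<partial>M)"
    using \<open>integrable M _\<close> k1(2) h(2) \<open>g \<ge> 0\<close> by (intro nn_integral_eq_integral) auto
  also have "\<dots> \<le> ennreal (\<integral>\<omega>. k \<omega> \<partial>M)"
    using integral_cond_exp_weight_le[OF assms(1) G k, of "\<lambda>\<omega>. h (\<xi> \<omega>)" H g] h(2,3) \<open>g \<ge> 0\<close>
    by (intro ennreal_leI) (simp add: k1_def C_def)
  also have "\<dots> = (\<integral>\<^sup>+\<omega>. ennreal (k \<omega>) \<partial>M)"
    using k \<open>integrable M _\<close> order_trans[OF k(2,3)]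
    by (intro nn_integral_eq_integral[symmetric] integrable_const_bound[where B = N]) auto
  finally show ?thesis
    unfolding C_def .
qed

lemma nn_integral_mult_le_of_truncations:
  fixes k D :: "'a \<Rightarrow> real"
  assumes [measurable]: "k \<in> borel_measurable M" "D \<in> borel_measurable M"
    and D: "\<And>\<omega>. 0 \<le> D \<omega>"
    and trunc: "\<And>n :: nat. (\<integral>\<^sup>+\<omega>. ennreal (min (k \<omega>) n * D \<omega>) \<partial>M) \<le> (\<integral>\<^sup>+\<omega>. ennreal (min (k \<omega>) n) \<partial>M)"
  shows "(\<integral>\<^sup>+\<omega>. ennreal (k \<omega> * D \<omega>) \<partial>M) \<le> (\<integral>\<^sup>+\<omega>. ennreal (k \<omega>) \<partial>M)"
proof -
  define f where "f n \<omega> = ennreal (min (k \<omega>) (real n) * D \<omega>)" for n \<omega>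
  have [measurable]: "f n \<in> borel_measurable M" for n
    unfolding f_def by measurable
  have "incseq f"
    unfolding f_def incseq_def le_fun_def by (auto intro!: ennreal_leI mult_right_mono D)
  have "(SUP n. f n \<omega>) = ennreal (k \<omega> * D \<omega>)" for \<omega>
  proof (rule antisym)
    show "(SUP n. f n \<omega>) \<le> ennreal (k \<omega> * D \<omega>)"
      unfolding f_def by (intro SUP_least ennreal_leI mult_right_mono D) auto
    have "f (nat \<lceil>k \<omega>\<rceil>) \<omega> = ennreal (k \<omega> * D \<omega>)"
      unfolding f_def by (simp add: min_absorb1 real_nat_ceiling_ge)
    then show "ennreal (k \<omega> * D \<omega>) \<le> (SUP n. f n \<omega>)"
      by (metis SUP_upper UNIV_I)
  qed
  then have "(\<integral>\<^sup>+\<omega>. ennreal (k \<omega> * D \<omega>) \<partial>M) = (SUP n. integral\<^sup>N M (f n))"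
    using nn_integral_monotone_convergence_SUP[OF \<open>incseq f\<close>] by simp
  also have "\<dots> \<le> (\<integral>\<^sup>+\<omega>. ennreal (k \<omega>) \<partial>M)"
  proof (rule SUP_least)
    fix n
    have "integral\<^sup>N M (f n) \<le> (\<integral>\<^sup>+\<omega>. ennreal (min (k \<omega>) n) \<partial>M)"
      unfolding f_def by (rule trunc)
    also have "\<dots> \<le> (\<integral>\<^sup>+\<omega>. ennreal (k \<omega>) \<partial>M)"
      by (intro nn_integral_mono ennreal_leI) auto
    finally show "integral\<^sup>N M (f n) \<le> (\<integral>\<^sup>+\<omega>. ennreal (k \<omega>) \<partial>M)" .
  qed
  finally show ?thesis .
qed

text \<open>The \<open>i\<close>-th summand of \<open>M\<^sup>y\<^sub>k\<close> is \<open>var_increment M (F (i - 1)) y (\<xi> i)\<close>.\<close>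
definition var_increment :: "'a measure \<Rightarrow> 'a measure \<Rightarrow> real \<Rightarrow> ('a \<Rightarrow> real) \<Rightarrow> 'a \<Rightarrow> real" where
  "var_increment M G y \<xi> \<omega> =
     real_cond_exp M G (\<lambda>\<omega>'. (\<xi> \<omega>')\<^sup>2 * indicator {\<omega>'' \<in> space M. \<bar>\<xi> \<omega>''\<bar> \<le> y} \<omega>') \<omega>
   + (\<xi> \<omega>)\<^sup>2 * indicator {\<omega>'' \<in> space M. \<bar>\<xi> \<omega>''\<bar> > y} \<omega>"

lemma var_increment_measurable:
  assumes "subalgebra F G" "space F = space M" "\<xi> \<in> borel_measurable F"
  shows "var_increment M G y \<xi> \<in> borel_measurable F"
proof -
  note [measurable] = assms(3) measurable_from_subalg[OF assms(1) borel_measurable_cond_exp]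
  have large: "{\<omega> \<in> space M. \<bar>\<xi> \<omega>\<bar> > y} = {\<omega> \<in> space F. \<bar>\<xi> \<omega>\<bar> > y}"
    using assms(2) by simp
  show ?thesis
    unfolding var_increment_def large by measurable
qed

lemma var_increment_AE_eq:
  assumes "finite_measure M" "subalgebra M G" and [measurable]: "\<xi> \<in> borel_measurable M"
  shows "AE \<omega> in M. var_increment M G y \<xi> \<omega>
    = real_cond_exp M G (\<lambda>\<omega>. (\<xi> \<omega>)\<^sup>2 * of_bool (\<bar>\<xi> \<omega>\<bar> \<le> y)) \<omega> + (\<xi> \<omega>)\<^sup>2 * of_bool (y < \<bar>\<xi> \<omega>\<bar>)"
proof -
  interpret finite_measure M
    by fact
  interpret finite_measure_subalgebra M G
    by unfold_locales fact
  have "AE \<omega> in M. real_cond_exp M G (\<lambda>\<omega>'. (\<xi> \<omega>')\<^sup>2 * indicator {\<omega>'' \<in> space M. \<bar>\<xi> \<omega>''\<bar> \<le> y} \<omega>') \<omega>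
      = real_cond_exp M G (\<lambda>\<omega>. (\<xi> \<omega>)\<^sup>2 * of_bool (\<bar>\<xi> \<omega>\<bar> \<le> y)) \<omega>"
    by (rule real_cond_exp_cong) (auto simp: indicator_def)
  with AE_space show ?thesis
    by eventually_elim (simp add: var_increment_def indicator_def)
qed

lemma cond_symmetric_exp_step:
  fixes \<xi> k :: "'a \<Rightarrow> real" and l y :: real
  assumes "finite_measure M" and G: "subalgebra M G"
    and \<xi>[measurable]: "\<xi> \<in> borel_measurable M" and sym: "cond_symmetric M G \<xi>"
    and k: "k \<in> borel_measurable G" "\<And>\<omega>. 0 \<le> k \<omega>" and "y \<ge> 0"
  shows "(\<integral>\<^sup>+\<omega>. ennreal (k \<omega> * exp (l * \<xi> \<omega> - cosh_coeff y l * var_increment M G y \<xi> \<omega>)) \<partial>M)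
    \<le> (\<integral>\<^sup>+\<omega>. ennreal (k \<omega>) \<partial>M)"
proof -
  define g where "g = cosh_coeff y l"
  define h where "h t = t\<^sup>2 * of_bool (\<bar>t\<bar> \<le> y)" for t
  define \<phi> where "\<phi> t = exp (l * t - g * (t\<^sup>2 * of_bool (y < \<bar>t\<bar>)))" for t
  define D where "D \<omega> = exp (- g * real_cond_exp M G (\<lambda>\<omega>. h (\<xi> \<omega>)) \<omega>) * \<phi> (\<xi> \<omega>)" for \<omega>
  have [measurable]: "h \<in> borel_measurable borel" "\<phi> \<in> borel_measurable borel"
    unfolding h_def \<phi>_def by measurable
  have [measurable]: "k \<in> borel_measurable M" "D \<in> borel_measurable M"
    using measurable_from_subalg[OF G k(1)] unfolding D_def by measurable
  have "g \<ge> 0"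
    unfolding g_def by (rule cosh_coeff_nonneg) fact
  have "AE \<omega> in M. exp (l * \<xi> \<omega> - g * var_increment M G y \<xi> \<omega>) = D \<omega>"
    using var_increment_AE_eq[OF assms(1) G \<xi>, where y = y]
  proof eventually_elim
    case (elim \<omega>)
    then have "l * \<xi> \<omega> - g * var_increment M G y \<xi> \<omega>
        = - g * real_cond_exp M G (\<lambda>\<omega>. h (\<xi> \<omega>)) \<omega> + (l * \<xi> \<omega> - g * ((\<xi> \<omega>)\<^sup>2 * of_bool (y < \<bar>\<xi> \<omega>\<bar>)))"
      by (simp add: h_def algebra_simps)
    then show ?case
      by (simp only: D_def \<phi>_def exp_add)
  qed
  then have "(\<integral>\<^sup>+\<omega>. ennreal (k \<omega> * exp (l * \<xi> \<omega> - g * var_increment M G y \<xi> \<omega>)) \<partial>M)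
      = (\<integral>\<^sup>+\<omega>. ennreal (k \<omega> * D \<omega>) \<partial>M)"
    by (intro nn_integral_cong_AE) (auto elim!: eventually_mono)
  also have "\<dots> \<le> (\<integral>\<^sup>+\<omega>. ennreal (k \<omega>) \<partial>M)"
  proof (rule nn_integral_mult_le_of_truncations)
    show "0 \<le> D \<omega>" for \<omega>
      by (simp add: D_def \<phi>_def)
    fix n :: nat
    show "(\<integral>\<^sup>+\<omega>. ennreal (min (k \<omega>) n * D \<omega>) \<partial>M) \<le> (\<integral>\<^sup>+\<omega>. ennreal (min (k \<omega>) n) \<partial>M)"
      unfolding D_def mult.assoc[symmetric]
    proof (rule cond_symmetric_exp_step_bounded[OF assms(1) G \<xi> sym, where N = n])
      show "(\<lambda>\<omega>. min (k \<omega>) n) \<in> borel_measurable G"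
        using k(1) by measurable
      show "\<phi> t + \<phi> (- t) \<le> 2 * (1 + g * h t)" for t
        unfolding \<phi>_def h_def g_def by (rule exp_tilt_even_part_le[OF \<open>y \<ge> 0\<close>])
      show "h t \<le> y\<^sup>2" for t
        unfolding h_def using power_mono[of "\<bar>t\<bar>" y 2] by auto
    qed (use k(2) \<open>g \<ge> 0\<close> in \<open>auto simp: h_def \<phi>_def\<close>)
  qed measurable
  finally show ?thesis
    unfolding g_def .
qed

section \<open>Ville's maximal inequality\<close>

definition finite_filtration :: "'a measure \<Rightarrow> (nat \<Rightarrow> 'a measure) \<Rightarrow> nat \<Rightarrow> bool" where
  "finite_filtration M F n \<longleftrightarrow>
     (\<forall>i\<le>n. subalgebra M (F i)) \<and> (\<forall>i j. i \<le> j \<longrightarrow> j \<le> n \<longrightarrow> sets (F i) \<subseteq> sets (F j))"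

lemma finite_filtration_subalgebra:
  "finite_filtration M F n \<Longrightarrow> i \<le> n \<Longrightarrow> subalgebra M (F i)"
  by (simp add: finite_filtration_def)

lemma finite_filtration_subalgebra_mono:
  assumes "finite_filtration M F n" "i \<le> j" "j \<le> n"
  shows "subalgebra (F j) (F i)"
  using assms finite_filtration_subalgebra[OF assms(1), of i] finite_filtration_subalgebra[OF assms(1), of j]
  by (auto simp: finite_filtration_def subalgebra_def)

lemma finite_filtration_space:
  "finite_filtration M F n \<Longrightarrow> i \<le> n \<Longrightarrow> space (F i) = space M"
  using finite_filtration_subalgebra[of M F n i] by (simp add: subalgebra_def)

lemma finite_filtration_measurable_sum:
  fixes X :: "nat \<Rightarrow> 'a \<Rightarrow> real"
  assumes F: "finite_filtration M F n" and X: "\<And>i. i \<in> {1..n} \<Longrightarrow> X i \<in> borel_measurable (F i)"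
    and "k \<le> n"
  shows "(\<lambda>\<omega>. \<Sum>i=1..k. X i \<omega>) \<in> borel_measurable (F k)"
proof (rule borel_measurable_sum)
  fix i assume "i \<in> {1..k}"
  then show "X i \<in> borel_measurable (F k)"
    using \<open>k \<le> n\<close> by (intro measurable_from_subalg[OF finite_filtration_subalgebra_mono[OF F] X]) auto
qed

lemma supermartingale_stopped_nn_integral_le:
  fixes Z :: "nat \<Rightarrow> 'a \<Rightarrow> real" and F :: "nat \<Rightarrow> 'a measure" and A B :: "nat \<Rightarrow> 'a set"
  assumes F: "finite_filtration M F n"
    and Z: "\<And>k. k \<le> n \<Longrightarrow> Z k \<in> borel_measurable (F k)" "\<And>k \<omega>. 0 \<le> Z k \<omega>"
    and step: "\<And>m K. m < n \<Longrightarrow> K \<in> borel_measurable (F m) \<Longrightarrow> (\<And>\<omega>. 0 \<le> K \<omega>) \<Longrightarrow>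
      (\<integral>\<^sup>+\<omega>. ennreal (K \<omega> * Z (Suc m) \<omega>) \<partial>M) \<le> (\<integral>\<^sup>+\<omega>. ennreal (K \<omega> * Z m \<omega>) \<partial>M)"
    and A: "\<And>k. k \<in> {1..n} \<Longrightarrow> A k \<in> sets (F k)" and B: "\<And>m. m \<le> n \<Longrightarrow> B m \<in> sets (F m)"
    and "B 0 = space M"
    and disjoint: "\<And>m. m < n \<Longrightarrow> A (Suc m) \<inter> B (Suc m) = {}"
    and partition: "\<And>m. m < n \<Longrightarrow> A (Suc m) \<union> B (Suc m) = B m"
    and "m \<le> n"
  shows "(\<Sum>k=1..m. \<integral>\<^sup>+\<omega>. ennreal (Z k \<omega> * indicator (A k) \<omega>) \<partial>M)
      + (\<integral>\<^sup>+\<omega>. ennreal (Z m \<omega> * indicator (B m) \<omega>) \<partial>M) \<le> (\<integral>\<^sup>+\<omega>. ennreal (Z 0 \<omega>) \<partial>M)"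
  using \<open>m \<le> n\<close>
proof (induction m)
  case 0
  then show ?case
    using \<open>B 0 = space M\<close> by (auto intro!: nn_integral_mono)
next
  case (Suc m)
  have sets_F: "X \<in> sets M" if "X \<in> sets (F j)" "j \<le> n" for X j
    using finite_filtration_subalgebra[OF F that(2)] that(1) by (auto simp: subalgebra_def)
  have [measurable]: "A (Suc m) \<in> sets M" "B (Suc m) \<in> sets M" "Z (Suc m) \<in> borel_measurable M"
    using Suc.prems sets_F A B measurable_from_subalg[OF finite_filtration_subalgebra[OF F] Z(1)] by auto
  have split: "indicator (B m) \<omega> = (indicator (A (Suc m)) \<omega> + indicator (B (Suc m)) \<omega> :: real)" for \<omega>
    using disjoint[of m] partition[of m] Suc.prems by (auto simp: indicator_def)
  have "(\<integral>\<^sup>+\<omega>. ennreal (Z (Suc m) \<omega> * indicator (A (Suc m)) \<omega>) \<partial>M)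
      + (\<integral>\<^sup>+\<omega>. ennreal (Z (Suc m) \<omega> * indicator (B (Suc m)) \<omega>) \<partial>M)
      = (\<integral>\<^sup>+\<omega>. ennreal (indicator (B m) \<omega> * Z (Suc m) \<omega>) \<partial>M)"
  proof (subst nn_integral_add[symmetric], measurable, intro nn_integral_cong)
    show "ennreal (Z (Suc m) \<omega> * indicator (A (Suc m)) \<omega>) + ennreal (Z (Suc m) \<omega> * indicator (B (Suc m)) \<omega>)
        = ennreal (indicator (B m) \<omega> * Z (Suc m) \<omega>)" for \<omega>
      using Z(2)[of "Suc m" \<omega>] by (simp add: split ennreal_plus[symmetric] algebra_simps del: ennreal_plus)
  qed
  also have "\<dots> \<le> (\<integral>\<^sup>+\<omega>. ennreal (indicator (B m) \<omega> * Z m \<omega>) \<partial>M)"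
    using Suc.prems B[of m] by (intro step) auto
  finally show ?case
    using Suc by (simp add: add.assoc mult.commute) (meson add_left_mono order_trans)
qed

lemma first_entrance:
  fixes E :: "nat \<Rightarrow> 'a set"
  assumes "\<omega> \<in> (\<Union>k\<in>{1..n}. E k)"
  obtains k where "k \<in> {1..n}" "\<omega> \<in> E k - (\<Union>j\<in>{1..<k}. E j)"
proof -
  define k where "k = (LEAST k. k \<in> {1..n} \<and> \<omega> \<in> E k)"
  have "\<exists>k. k \<in> {1..n} \<and> \<omega> \<in> E k"
    using assms by blast
  from LeastI_ex[OF this] have k: "k \<in> {1..n}" "\<omega> \<in> E k"
    unfolding k_def by simp_all
  have "\<omega> \<notin> E j" if "j \<in> {1..<k}" for j
    using that k(1) Least_le[of "\<lambda>k. k \<in> {1..n} \<and> \<omega> \<in> E k" j] by (auto simp: k_def)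
  then show ?thesis
    using k by (intro that) auto
qed

lemma supermartingale_maximal_inequality:
  fixes Z :: "nat \<Rightarrow> 'a \<Rightarrow> real" and F :: "nat \<Rightarrow> 'a measure" and E :: "nat \<Rightarrow> 'a set" and c :: real
  assumes F: "finite_filtration M F n"
    and Z: "\<And>k. k \<le> n \<Longrightarrow> Z k \<in> borel_measurable (F k)" "\<And>k \<omega>. 0 \<le> Z k \<omega>"
    and step: "\<And>m K. m < n \<Longrightarrow> K \<in> borel_measurable (F m) \<Longrightarrow> (\<And>\<omega>. 0 \<le> K \<omega>) \<Longrightarrow>
      (\<integral>\<^sup>+\<omega>. ennreal (K \<omega> * Z (Suc m) \<omega>) \<partial>M) \<le> (\<integral>\<^sup>+\<omega>. ennreal (K \<omega> * Z m \<omega>) \<partial>M)"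
    and E: "\<And>k. k \<in> {1..n} \<Longrightarrow> E k \<in> sets (F k)"
    and above: "\<And>k \<omega>. k \<in> {1..n} \<Longrightarrow> \<omega> \<in> E k \<Longrightarrow> c \<le> Z k \<omega>"
  shows "ennreal c * emeasure M (\<Union>k\<in>{1..n}. E k) \<le> (\<integral>\<^sup>+\<omega>. ennreal (Z 0 \<omega>) \<partial>M)"
proof -
  have sets_F: "X \<in> sets M" if "X \<in> sets (F j)" "j \<le> n" for X j
    using finite_filtration_subalgebra[OF F that(2)] that(1) by (auto simp: subalgebra_def)
  have E_F: "E k \<in> sets (F j)" if "k \<in> {1..j}" "j \<le> n" for k j
    using E[of k] finite_filtration_subalgebra_mono[OF F, of k j] that by (auto simp: subalgebra_def)
  define A where "A k = E k - (\<Union>j\<in>{1..<k}. E j)" for k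
  define B where "B m = space M - (\<Union>j\<in>{1..m}. E j)" for m
  have A_F: "A k \<in> sets (F k)" if "k \<in> {1..n}" for k
    unfolding A_def using that E_F by (intro sets.Diff sets.finite_UN) auto
  have B_F: "B m \<in> sets (F m)" if "m \<le> n" for m
    unfolding B_def using that E_F finite_filtration_space[OF F that, symmetric] by (intro sets.Diff sets.finite_UN) auto
  have "E (Suc m) \<subseteq> space M" if "m < n" for m
    using that sets.sets_into_space[OF sets_F[OF E_F, of "Suc m" "Suc m"]] by auto
  then have stopped: "(\<Sum>k=1..n. \<integral>\<^sup>+\<omega>. ennreal (Z k \<omega> * indicator (A k) \<omega>) \<partial>M)
      + (\<integral>\<^sup>+\<omega>. ennreal (Z n \<omega> * indicator (B n) \<omega>) \<partial>M) \<le> (\<integral>\<^sup>+\<omega>. ennreal (Z 0 \<omega>) \<partial>M)"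
    by (intro supermartingale_stopped_nn_integral_le[OF F Z step A_F B_F])
      (auto simp: A_def B_def atLeastLessThanSuc_atLeastAtMost atLeastAtMostSuc_conv)
  have "ennreal c * indicator (\<Union>k\<in>{1..n}. E k) \<omega> \<le> (\<Sum>k=1..n. ennreal (Z k \<omega> * indicator (A k) \<omega>))" for \<omega>
  proof (cases "\<omega> \<in> (\<Union>k\<in>{1..n}. E k)")
    case True
    then obtain k where k: "k \<in> {1..n}" "\<omega> \<in> A k"
      unfolding A_def by (rule first_entrance)
    then have "ennreal c * indicator (\<Union>k\<in>{1..n}. E k) \<omega> \<le> ennreal (Z k \<omega> * indicator (A k) \<omega>)"
      using True above[of k \<omega>] by (simp add: A_def ennreal_leI)
    also have "\<dots> \<le> (\<Sum>k=1..n. ennreal (Z k \<omega> * indicator (A k) \<omega>))"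
      using k(1) by (intro member_le_sum) auto
    finally show ?thesis .
  qed simp
  then have "(\<integral>\<^sup>+\<omega>. ennreal c * indicator (\<Union>k\<in>{1..n}. E k) \<omega> \<partial>M)
      \<le> (\<integral>\<^sup>+\<omega>. (\<Sum>k=1..n. ennreal (Z k \<omega> * indicator (A k) \<omega>)) \<partial>M)"
    by (rule nn_integral_mono)
  also have "\<dots> = (\<Sum>k=1..n. \<integral>\<^sup>+\<omega>. ennreal (Z k \<omega> * indicator (A k) \<omega>) \<partial>M)"
  proof (rule nn_integral_sum)
    fix k assume "k \<in> {1..n}"
    then have [measurable]: "A k \<in> sets M" "Z k \<in> borel_measurable M"
      using sets_F A_F measurable_from_subalg[OF finite_filtration_subalgebra[OF F] Z(1)] by auto
    show "(\<lambda>\<omega>. ennreal (Z k \<omega> * indicator (A k) \<omega>)) \<in> borel_measurable M"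
      by measurable
  qed
  also have "\<dots> \<le> (\<integral>\<^sup>+\<omega>. ennreal (Z 0 \<omega>) \<partial>M)"
    by (rule order_trans[OF add_increasing2[OF zero_le order_refl] stopped])
  moreover have "(\<Union>k\<in>{1..n}. E k) \<in> sets M"
    using sets_F[OF E] by (intro sets.finite_UN) auto
  ultimately show ?thesis
    by (simp add: nn_integral_cmult_indicator)
qed

section \<open>The exponential supermartingale\<close>

lemma var_increment_adapted:
  assumes F: "finite_filtration M F n" and \<xi>: "\<And>i. i \<in> {1..n} \<Longrightarrow> \<xi> i \<in> borel_measurable (F i)"
    and "i \<in> {1..n}"
  shows "var_increment M (F (i - 1)) y (\<xi> i) \<in> borel_measurable (F i)"
  using assms
  by (intro var_increment_measurable finite_filtration_subalgebra_mono[OF F] finite_filtration_space[OF F] \<xi>) auto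

lemma cond_symmetric_exp_supermartingale:
  fixes \<xi> :: "nat \<Rightarrow> 'a \<Rightarrow> real" and K :: "'a \<Rightarrow> real" and l y :: real
  assumes "finite_measure M" and F: "finite_filtration M F n"
    and \<xi>: "\<And>i. i \<in> {1..n} \<Longrightarrow> \<xi> i \<in> borel_measurable (F i)"
    and sym: "\<And>i. i \<in> {1..n} \<Longrightarrow> cond_symmetric M (F (i - 1)) (\<xi> i)"
    and "y \<ge> 0" "m < n"
    and K: "K \<in> borel_measurable (F m)" "\<And>\<omega>. 0 \<le> K \<omega>"
  defines "Z k \<omega> \<equiv> exp (l * (\<Sum>i=1..k. \<xi> i \<omega>)
    - cosh_coeff y l * (\<Sum>i=1..k. var_increment M (F (i - 1)) y (\<xi> i) \<omega>))"
  shows "(\<integral>\<^sup>+\<omega>. ennreal (K \<omega> * Z (Suc m) \<omega>) \<partial>M) \<le> (\<integral>\<^sup>+\<omega>. ennreal (K \<omega> * Z m \<omega>) \<partial>M)"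
proof -
  have "Z (Suc m) \<omega> = Z m \<omega> * exp (l * \<xi> (Suc m) \<omega> - cosh_coeff y l * var_increment M (F m) y (\<xi> (Suc m)) \<omega>)"
    for \<omega>
    by (simp add: Z_def exp_add[symmetric] algebra_simps)
  moreover have "(\<lambda>\<omega>. \<Sum>i=1..m. \<xi> i \<omega>) \<in> borel_measurable (F m)"
    "(\<lambda>\<omega>. \<Sum>i=1..m. var_increment M (F (i - 1)) y (\<xi> i) \<omega>) \<in> borel_measurable (F m)"
    using \<open>m < n\<close> by (intro finite_filtration_measurable_sum[OF F] \<xi> var_increment_adapted[OF F \<xi>]; simp)+
  then have "(\<lambda>\<omega>. K \<omega> * Z m \<omega>) \<in> borel_measurable (F m)"
    unfolding Z_def using K(1) by measurable
  then have "(\<integral>\<^sup>+\<omega>. ennreal ((K \<omega> * Z m \<omega>) * exp (l * \<xi> (Suc m) \<omega>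
        - cosh_coeff y l * var_increment M (F m) y (\<xi> (Suc m)) \<omega>)) \<partial>M)
      \<le> (\<integral>\<^sup>+\<omega>. ennreal (K \<omega> * Z m \<omega>) \<partial>M)"
    using \<open>m < n\<close> sym[of "Suc m"] K(2) \<open>y \<ge> 0\<close>
      measurable_from_subalg[OF finite_filtration_subalgebra[OF F] \<xi>, of "Suc m"]
    by (intro cond_symmetric_exp_step[OF assms(1) finite_filtration_subalgebra[OF F]]) (auto simp: Z_def)
  ultimately show ?thesis
    by (simp add: mult.assoc)
qed

lemma cond_symmetric_maximal_exp_bound:
  fixes M :: "'a measure" and F :: "nat \<Rightarrow> 'a measure"
    and \<xi> :: "nat \<Rightarrow> 'a \<Rightarrow> real" and n :: nat and x y v l :: real
  assumes "prob_space M" and F: "finite_filtration M F n"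
    and \<xi>: "\<And>i. i \<in> {1..n} \<Longrightarrow> \<xi> i \<in> borel_measurable (F i)"
    and sym: "\<And>i. i \<in> {1..n} \<Longrightarrow> cond_symmetric M (F (i - 1)) (\<xi> i)"
    and "y \<ge> 0" "l \<ge> 0"
  shows "measure M {\<omega> \<in> space M. \<exists>k\<in>{1..n}.
            x \<le> (\<Sum>i=1..k. \<xi> i \<omega>) \<and> (\<Sum>i=1..k. var_increment M (F (i - 1)) y (\<xi> i) \<omega>) \<le> v\<^sup>2}
         \<le> exp (- l * x + cosh_coeff y l * v\<^sup>2)"
proof -
  interpret prob_space M
    by fact
  define g where "g = cosh_coeff y l"
  define S where "S k = (\<lambda>\<omega>. \<Sum>i=1..k. \<xi> i \<omega>)" for k
  define Q where "Q k = (\<lambda>\<omega>. \<Sum>i=1..k. var_increment M (F (i - 1)) y (\<xi> i) \<omega>)" for k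
  define Z where "Z k \<omega> = exp (l * S k \<omega> - g * Q k \<omega>)" for k \<omega>
  define E where "E k = {\<omega> \<in> space (F k). x \<le> S k \<omega> \<and> Q k \<omega> \<le> v\<^sup>2}" for k
  have [measurable]: "S k \<in> borel_measurable (F k)" "Q k \<in> borel_measurable (F k)" if "k \<le> n" for k
    unfolding S_def Q_def using that
    by (intro finite_filtration_measurable_sum[OF F] \<xi> var_increment_adapted[OF F \<xi>]; simp)+
  have Z_F: "Z k \<in> borel_measurable (F k)" and E_F: "E k \<in> sets (F k)" if "k \<le> n" for k
    unfolding Z_def E_def using that by measurable
  have step: "(\<integral>\<^sup>+\<omega>. ennreal (K \<omega> * Z (Suc m) \<omega>) \<partial>M) \<le> (\<integral>\<^sup>+\<omega>. ennreal (K \<omega> * Z m \<omega>) \<partial>M)"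
    if "m < n" "K \<in> borel_measurable (F m)" "\<And>\<omega>. 0 \<le> K \<omega>" for m K
    using cond_symmetric_exp_supermartingale[OF finite_measure_axioms F \<xi> sym \<open>y \<ge> 0\<close> that]
    by (simp add: Z_def S_def Q_def g_def)
  define c where "c = exp (l * x - g * v\<^sup>2)"
  have above: "c \<le> Z k \<omega>" if "\<omega> \<in> E k" for k \<omega>
    using that \<open>l \<ge> 0\<close> cosh_coeff_nonneg[OF \<open>y \<ge> 0\<close>] mult_left_mono[of x "S k \<omega>" l] mult_left_mono[of "Q k \<omega>" "v\<^sup>2" g]
    by (auto simp: c_def Z_def E_def g_def)
  have "ennreal c * emeasure M (\<Union>k\<in>{1..n}. E k) \<le> (\<integral>\<^sup>+\<omega>. ennreal (Z 0 \<omega>) \<partial>M)"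
    by (rule supermartingale_maximal_inequality[OF F Z_F _ step E_F above]) (auto simp: Z_def)
  then have "c * measure M (\<Union>k\<in>{1..n}. E k) \<le> 1"
    by (simp add: Z_def S_def Q_def emeasure_eq_measure prob_space ennreal_mult'[symmetric] c_def)
  moreover have "{\<omega> \<in> space M. \<exists>k\<in>{1..n}. x \<le> S k \<omega> \<and> Q k \<omega> \<le> v\<^sup>2} = (\<Union>k\<in>{1..n}. E k)"
    using finite_filtration_space[OF F] by (auto simp: E_def)
  ultimately show ?thesis
    by (simp add: S_def Q_def g_def c_def exp_diff exp_minus field_simps)
qed

lemma B0_eq_exp_cosh_coeff:
  assumes "x > 0" "v > 0" "y \<ge> 0"
  obtains l where "l > 0" "B0 x y v = exp (- l * x + cosh_coeff y l * v\<^sup>2)"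
proof (cases "y = 0")
  case True
  have "- (x\<^sup>2) / (2 * v\<^sup>2) = - (x / v\<^sup>2) * x + (x / v\<^sup>2)\<^sup>2 / 2 * v\<^sup>2"
    using assms by (simp add: field_simps power2_eq_square)
  then show ?thesis
    using True assms by (intro that[of "x / v\<^sup>2"]) (auto simp: B0_def cosh_coeff_def)
next
  case False
  define l where "l = 1 / y * ln (sqrt (1 + x\<^sup>2 * y\<^sup>2 / v ^ 4) + x * y / v\<^sup>2)"
  have "1 \<le> sqrt (1 + x\<^sup>2 * y\<^sup>2 / v ^ 4)" "0 < x * y / v\<^sup>2"
    using assms False by auto
  then have "0 < ln (sqrt (1 + x\<^sup>2 * y\<^sup>2 / v ^ 4) + x * y / v\<^sup>2)"
    by (intro ln_gt_zero) linarith
  then have "0 < l"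
    using assms False by (simp add: l_def)
  then show ?thesis
    using False by (intro that[of l]) (simp_all add: B0_def cosh_coeff_def l_def Let_def)
qed

theorem theorem2p3:
  fixes M :: "'a measure" and F :: "nat \<Rightarrow> 'a measure"
    and \<xi> :: "nat \<Rightarrow> 'a \<Rightarrow> real" and n :: nat and x y v :: real
  assumes prob: "prob_space M"
    and sub: "\<And>i. i \<le> n \<Longrightarrow> subalgebra M (F i)"
    and F0: "sets (F 0) = {{}, space M}"
    and mono: "\<And>i j. i \<le> j \<Longrightarrow> j \<le> n \<Longrightarrow> sets (F i) \<subseteq> sets (F j)"
    and meas: "\<And>i. i \<in> {1..n} \<Longrightarrow> \<xi> i \<in> borel_measurable (F i)"
    and intg: "\<And>i. i \<in> {1..n} \<Longrightarrow> integrable M (\<xi> i)"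
    and mart: "\<And>i. i \<in> {1..n} \<Longrightarrow> AE \<omega> in M. real_cond_exp M (F (i - 1)) (\<xi> i) \<omega> = 0"
    and symm: "\<And>i z. i \<in> {1..n} \<Longrightarrow> z \<ge> 0 \<Longrightarrow>
       AE \<omega> in M. real_cond_exp M (F (i - 1)) (indicator {\<omega>' \<in> space M. \<xi> i \<omega>' > z}) \<omega>
                  = real_cond_exp M (F (i - 1)) (indicator {\<omega>' \<in> space M. \<xi> i \<omega>' < - z}) \<omega>"
    and x: "x > 0" and v: "v > 0" and y: "y \<ge> 0"
  shows "measure M {\<omega> \<in> space M. \<exists>k\<in>{1..n}.
            (\<Sum>i=1..k. \<xi> i \<omega>) \<ge> x \<and>
            (\<Sum>i=1..k. real_cond_exp M (F (i - 1))
                          (\<lambda>\<omega>'. (\<xi> i \<omega>')\<^sup>2 * indicator {\<omega>'' \<in> space M. \<bar>\<xi> i \<omega>''\<bar> \<le> y} \<omega>') \<omega>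
                        + (\<xi> i \<omega>)\<^sup>2 * indicator {\<omega>'' \<in> space M. \<bar>\<xi> i \<omega>''\<bar> > y} \<omega>) \<le> v\<^sup>2}
         \<le> B0 x y v"
proof -
  obtain l where l: "l > 0" and B0: "B0 x y v = exp (- l * x + cosh_coeff y l * v\<^sup>2)"
    using B0_eq_exp_cosh_coeff[OF x v y] .
  have filtration: "finite_filtration M F n"
    using sub mono by (simp add: finite_filtration_def)
  have sym: "cond_symmetric M (F (i - 1)) (\<xi> i)" if "i \<in> {1..n}" for i
    using symm[OF that] by (simp add: cond_symmetric_def)
  show ?thesis
    using cond_symmetric_maximal_exp_bound[OF prob filtration meas sym y less_imp_le[OF l], of x v]
    unfolding B0 var_increment_def .
qed

end
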